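(* Let $n\ge t\ge 1$ be integers and $\Bbbk$ a field. For every integer $p$, $$\widetilde{H}_p(\Omega^n_t;\Bbbk)\cong\begin{cases}\widetilde{H}_{p+1-\frac{2n}{t+1}}(\{\emptyset\};\Bbbk) & \text{if } n\equiv 0 \pmod{t+1},\\ \widetilde{H}_{p+2-\frac{2(n+1)}{t+1}}(\{\emptyset\};\Bbbk) & \text{if } n\equiv t \pmod{t+1},\\ 0 & \text{otherwise.}\end{cases}$$
   Context: For integers $n\ge t\ge 1$, $\Omega^n_t$ is the simplicial complex on vertex set $\{1,\dots,n\}$ whose facets are the sets $\{1,\dots,n\}\setminus\{i,i+1,\dots,i+t-1\}$ for $i=1,\dots,n-t+1$ (so $\Omega^t_t=\{\emptyset\}$). $\widetilde{H}_p(\cdot;\Bbbk)$ denotes reduced simplicial homology over $\Bbbk$. The irrelevant complex $\{\emptyset\}$ has $\widetilde{H}_{-1}(\{\emptyset\};\Bbbk)\cong\Bbbk$ and $\widetilde{H}_p(\{\emptyset\};\Bbbk)=0$ for $p\neq -1$. *)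

theory Defs
  imports Main "HOL.Vector_Spaces" "HOL-Library.Function_Algebras"
begin

text \<open>A simplicial complex is represented by its set of faces (finite sets of
vertices, closed under subsets, containing the empty face).\<close>

definition Omega :: "nat \<Rightarrow> nat \<Rightarrow> nat set set" where
  "Omega n t = {F. \<exists>i\<in>{1..n - t + 1}. F \<subseteq> {1..n} - {i..i + t - 1}}"

definition faces :: "nat set set \<Rightarrow> int \<Rightarrow> nat set set" where
  "faces K p = {F \<in> K. int (card F) = p + 1}"

definition chains :: "'k::field itself \<Rightarrow> nat set set \<Rightarrow> int \<Rightarrow> (nat set \<Rightarrow> 'k) set" where
  "chains T K p = {c. \<forall>F. c F \<noteq> 0 \<longrightarrow> F \<in> faces K p}"

text \<open>Simplicial boundary (including the augmentation in degree 0):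
removing vertex v from a face G \<union> {v} carries sign (-1)^(number of vertices of G below v).\<close>
definition bd :: "nat set set \<Rightarrow> (nat set \<Rightarrow> 'k::field) \<Rightarrow> nat set \<Rightarrow> 'k" where
  "bd K c G = (if G \<in> K then
      (\<Sum>v\<in>(\<Union>K) - G. if insert v G \<in> K then (-1) ^ card {u \<in> G. u < v} * c (insert v G) else 0)
    else 0)"

definition fscale :: "'k::field \<Rightarrow> (nat set \<Rightarrow> 'k) \<Rightarrow> nat set \<Rightarrow> 'k" where
  "fscale a f = (\<lambda>x. a * f x)"

text \<open>Dimension over 'k of the reduced homology
  H_p(K;'k) = ker(bd_p) / im(bd_(p+1)).\<close>
definition rhdim :: "'k::field itself \<Rightarrow> nat set set \<Rightarrow> int \<Rightarrow> nat" where
  "rhdim T K p =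
     vector_space.dim (fscale :: 'k \<Rightarrow> _) {c \<in> chains T K p. bd K c = 0}
     - vector_space.dim (fscale :: 'k \<Rightarrow> _) (bd K ` chains T K (p + 1))"

end

theory Submission
  imports Defs
begin

text \<open>For a vertex v of a simplicial complex K, the chains of K are an extension of the chains of
  the link of v, shifted up one degree by joining with v, by the chains of the deletion of v.
  Hence H(K) = H(deletion) when the link is acyclic, and H_p(K) = H_(p-1)(link) when the
  deletion is acyclic; cones are acyclic. Deleting 2, ..., t (their links are cones with apex 1), then
  passing to the link of 1 and afterwards to the link of t+1 (the corresponding deletions are
  full simplices) turns Omega^n_t into Omega^(n-t-1)_t on the vertices t+2, ..., n, two degrees
  lower. The induction on n ends at Omega^t_t, at Omega^(t+1)_t (one link step away from the
  irrelevant complex), or, for t+2 \<le> n \<le> 2t, at the void complex. Homology is measured by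
  dimensions over the field, so the algebra reduces to rank-nullity.\<close>

section \<open>Rank-nullity\<close>

context vector_space
begin

lemma dim_zero_space: "dim {0} = 0"
  by (metis card.empty dim_eq_card_independent dim_span independent_empty span_empty)

lemma dim_kernel_add_dim_image_le:
  assumes f: "Vector_Spaces.linear scale scale f" and T: "finite T" "S \<subseteq> span T"
  shows "dim {x \<in> S. f x = 0} + dim (f ` S) \<le> dim S"
proof -
  interpret f: linear scale scale f by (rule f)
  define N where "N = {x \<in> S. f x = 0}"
  obtain BN where BN: "BN \<subseteq> N" "independent BN" "N \<subseteq> span BN"
    using maximal_independent_subset by blast
  obtain B where B: "BN \<subseteq> B" "B \<subseteq> S" "independent B" "S \<subseteq> span B"
    using maximal_independent_subset_extend[of BN S] BN by (auto simp: N_def)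
  have "finite B"
    using independent_span_bound[OF T(1) B(3)] B(2) T(2) by blast
  then have "finite BN"
    using B(1) finite_subset by blast
  have "f ` S \<subseteq> span (f ` (B - BN))"
  proof -
    have "f ` S \<subseteq> span (f ` B)"
      using B(4) f.span_image by blast
    moreover have "f ` B \<subseteq> insert 0 (f ` (B - BN))"
      using BN(1) by (auto simp: N_def)
    ultimately show ?thesis
      using span_mono[of "f ` B" "insert 0 (f ` (B - BN))"] span_insert_0 by auto
  qed
  then have "dim (f ` S) \<le> card (f ` (B - BN))"
    using \<open>finite B\<close> by (simp add: dim_le_card)
  also have "\<dots> \<le> card (B - BN)"
    using \<open>finite B\<close> by (simp add: card_image_le)
  also have "\<dots> = card B - card BN"
    using card_Diff_subset[OF \<open>finite BN\<close> B(1)] .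
  finally show ?thesis
    using basis_card_eq_dim[OF B(2,4,3)] basis_card_eq_dim[OF BN(1,3,2)]
      card_mono[OF \<open>finite B\<close> B(1)]
    by (simp add: N_def)
qed

lemma dim_le_dim_kernel_add_dim_image:
  assumes f: "Vector_Spaces.linear scale scale f" and S: "subspace S"
    and T: "finite T" "S \<subseteq> span T"
  shows "dim S \<le> dim {x \<in> S. f x = 0} + dim (f ` S)"
proof -
  interpret f: linear scale scale f by (rule f)
  define N where "N = {x \<in> S. f x = 0}"
  obtain BN where BN: "BN \<subseteq> N" "independent BN" "N \<subseteq> span BN"
    using maximal_independent_subset by blast
  obtain C where C: "C \<subseteq> f ` S" "independent C" "f ` S \<subseteq> span C"
    using maximal_independent_subset by blast
  have "finite BN"
    using independent_span_bound[OF T(1) BN(2)] BN(1) T(2) by (auto simp: N_def)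
  have "finite C"
    using independent_span_bound[of "f ` T" C] T C f.span_image by blast
  have "\<forall>c\<in>C. \<exists>x. x \<in> S \<and> f x = c"
    using C(1) by blast
  then obtain g where g: "\<forall>c\<in>C. g c \<in> S \<and> f (g c) = c"
    by metis
  \<comment> \<open>lifting a basis of the image and adding a basis of the kernel spans S\<close>
  have "S \<subseteq> span (BN \<union> g ` C)"
  proof
    fix x assume x: "x \<in> S"
    have "f ` g ` C = C"
      using g by (force simp: image_image)
    then have "span C = f ` span (g ` C)"
      using f.span_image[of "g ` C"] by simp
    then have "f x \<in> f ` span (g ` C)"
      using x C(3) by blast
    then obtain y where y: "y \<in> span (g ` C)" "f x = f y"
      by blast
    have "g ` C \<subseteq> S"
      using g by blast
    then have "y \<in> S"
      using y(1) span_minimal[OF _ S] by blast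
    then have "x - y \<in> N"
      using x y(2) S by (auto simp: N_def subspace_diff f.diff)
    then have "x - y \<in> span (BN \<union> g ` C)"
      using BN(3) span_mono[of BN "BN \<union> g ` C"] by blast
    moreover have "y \<in> span (BN \<union> g ` C)"
      using y(1) span_mono[of "g ` C" "BN \<union> g ` C"] by blast
    ultimately show "x \<in> span (BN \<union> g ` C)"
      by (metis span_add diff_add_cancel)
  qed
  then have "dim S \<le> card (BN \<union> g ` C)"
    using dim_le_card \<open>finite BN\<close> \<open>finite C\<close> by blast
  also have "\<dots> \<le> card BN + card C"
    using card_Un_le[of BN "g ` C"] card_image_le[OF \<open>finite C\<close>, of g] by linarith
  finally show ?thesis
    using basis_card_eq_dim[OF BN(1,3,2)] basis_card_eq_dim[OF C(1,3,2)] by (simp add: N_def)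
qed

lemma rank_nullity:
  assumes "Vector_Spaces.linear scale scale f" "subspace S" "finite T" "S \<subseteq> span T"
  shows "dim S = dim {x \<in> S. f x = 0} + dim (f ` S)"
  using dim_kernel_add_dim_image_le[OF assms(1,3,4)] dim_le_dim_kernel_add_dim_image[OF assms]
  by linarith

lemma dim_image_eq_of_kernel_trivial:
  assumes f: "Vector_Spaces.linear scale scale f" and S: "subspace S"
    and T: "finite T" "S \<subseteq> span T"
    and ker: "\<And>x. x \<in> S \<Longrightarrow> f x = 0 \<Longrightarrow> x = 0"
  shows "dim (f ` S) = dim S"
proof -
  have "{x \<in> S. f x = 0} = {0}"
    using ker subspace_0[OF S] module_hom.zero[OF f[folded module_hom_iff_linear]] by auto
  then show ?thesis
    using rank_nullity[OF f S T] dim_zero_space by simp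
qed

end

section \<open>Homology dimensions of chain complexes\<close>

definition cycles :: "(int \<Rightarrow> 'b set) \<Rightarrow> ('b \<Rightarrow> 'b::zero) \<Rightarrow> int \<Rightarrow> 'b set" where
  "cycles C d p = {x \<in> C p. d x = 0}"

definition boundaries :: "(int \<Rightarrow> 'b set) \<Rightarrow> ('b \<Rightarrow> 'b) \<Rightarrow> int \<Rightarrow> 'b set" where
  "boundaries C d p = d ` C (p + 1)"

definition acyclic_complex :: "(int \<Rightarrow> 'b set) \<Rightarrow> ('b \<Rightarrow> 'b::zero) \<Rightarrow> bool" where
  "acyclic_complex C d \<longleftrightarrow> (\<forall>p. cycles C d p \<subseteq> boundaries C d p)"

definition (in vector_space) homology_dim :: "(int \<Rightarrow> 'b set) \<Rightarrow> ('b \<Rightarrow> 'b) \<Rightarrow> int \<Rightarrow> nat" where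
  "homology_dim C d p = dim (cycles C d p) - dim (boundaries C d p)"

lemma cycles_cong: "(\<And>p x. x \<in> C p \<Longrightarrow> d x = d' x) \<Longrightarrow> cycles C d = cycles C d'"
  by (auto simp: fun_eq_iff cycles_def)

lemma boundaries_cong: "(\<And>p x. x \<in> C p \<Longrightarrow> d x = d' x) \<Longrightarrow> boundaries C d = boundaries C d'"
  by (auto simp: fun_eq_iff boundaries_def)

locale finite_chain_complex = vector_space scale
  for scale :: "'a::field \<Rightarrow> 'b::ab_group_add \<Rightarrow> 'b" +
  fixes C :: "int \<Rightarrow> 'b set" and d :: "'b \<Rightarrow> 'b"
  assumes subspace_C: "subspace (C p)"
    and finite_span_C: "\<exists>T. finite T \<and> C p \<subseteq> span T"
    and linear_d: "Vector_Spaces.linear scale scale d"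
    and d_closed: "x \<in> C (p + 1) \<Longrightarrow> d x \<in> C p"
    and d_d: "x \<in> C (p + 1) \<Longrightarrow> d (d x) = 0"
begin

lemma d_closed': "x \<in> C p \<Longrightarrow> d x \<in> C (p - 1)"
  using d_closed[of x "p - 1"] by simp

lemma subspace_cycles: "subspace (cycles C d p)"
proof -
  interpret d: linear scale scale d by (rule linear_d)
  show ?thesis
    using subspace_C[of p] by (auto simp: subspace_def cycles_def d.add d.scale)
qed

lemma subspace_boundaries: "subspace (boundaries C d p)"
  unfolding boundaries_def
  by (rule module_hom.subspace_image[OF linear_d[folded module_hom_iff_linear] subspace_C])

lemma boundaries_subset_cycles: "boundaries C d p \<subseteq> cycles C d p"
  by (auto simp: boundaries_def cycles_def d_closed d_d)

lemma finite_span_cycles: "\<exists>T. finite T \<and> cycles C d p \<subseteq> span T"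
  using finite_span_C[of p] by (auto simp: cycles_def)

lemma finite_span_boundaries: "\<exists>T. finite T \<and> boundaries C d p \<subseteq> span T"
  using finite_span_C[of p] boundaries_subset_cycles[of p] by (auto simp: cycles_def)

lemma homology_dim_acyclic:
  assumes "acyclic_complex C d"
  shows "homology_dim C d p = 0"
proof -
  have "cycles C d p = boundaries C d p"
    using assms boundaries_subset_cycles[of p] by (auto simp: acyclic_complex_def)
  then show ?thesis
    by (simp add: homology_dim_def)
qed

end

locale shifted_isomorphism = finite_chain_complex +
  fixes C' :: "int \<Rightarrow> 'b set" and d' f :: "'b \<Rightarrow> 'b"
  assumes linear_f: "Vector_Spaces.linear scale scale f"
    and f_onto: "f ` C (p - 1) = C' p"
    and f_kernel: "x \<in> C p \<Longrightarrow> f x = 0 \<Longrightarrow> x = 0"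
    and f_anticommute: "x \<in> C p \<Longrightarrow> d' (f x) = - f (d x)"
begin

lemma cycles_shifted: "cycles C' d' p = f ` cycles C d (p - 1)"
proof
  interpret f: linear scale scale f by (rule linear_f)
  show "f ` cycles C d (p - 1) \<subseteq> cycles C' d' p"
    using f_onto f_anticommute by (auto simp: cycles_def f.zero)
  show "cycles C' d' p \<subseteq> f ` cycles C d (p - 1)"
  proof
    fix y assume "y \<in> cycles C' d' p"
    then have "y \<in> f ` C (p - 1)" "d' y = 0"
      using f_onto[of p] by (auto simp: cycles_def)
    then obtain x where x: "x \<in> C (p - 1)" "y = f x" "d' y = 0"
      by blast
    then have "f (d x) = 0"
      using f_anticommute by simp
    then have "d x = 0"
      using f_kernel d_closed' x(1) by blast
    then show "y \<in> f ` cycles C d (p - 1)"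
      using x by (auto simp: cycles_def)
  qed
qed

lemma boundaries_shifted: "boundaries C' d' p = f ` boundaries C d (p - 1)"
proof -
  interpret f: linear scale scale f by (rule linear_f)
  interpret d: linear scale scale d by (rule linear_d)
  have "boundaries C' d' p = (\<lambda>x. - f (d x)) ` C p"
    using f_onto[of "p + 1"] f_anticommute by (force simp: boundaries_def)
  also have "\<dots> = (\<lambda>x. f (d x)) ` C p"
    using subspace_neg[OF subspace_C] by (force simp: d.neg f.neg)
  finally show ?thesis
    by (simp add: boundaries_def image_image)
qed

theorem homology_dim_shifted: "homology_dim C' d' p = homology_dim C d (p - 1)"
proof -
  obtain Z where Z: "finite Z" "cycles C d (p - 1) \<subseteq> span Z"
    using finite_span_cycles by blast
  obtain B where B: "finite B" "boundaries C d (p - 1) \<subseteq> span B"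
    using finite_span_boundaries by blast
  have "dim (f ` cycles C d (p - 1)) = dim (cycles C d (p - 1))"
    by (rule dim_image_eq_of_kernel_trivial[OF linear_f subspace_cycles Z])
      (auto simp: cycles_def f_kernel)
  moreover have "dim (f ` boundaries C d (p - 1)) = dim (boundaries C d (p - 1))"
    using boundaries_subset_cycles[of "p - 1"]
    by (intro dim_image_eq_of_kernel_trivial[OF linear_f subspace_boundaries B])
      (auto simp: cycles_def f_kernel)
  ultimately show ?thesis
    unfolding homology_dim_def cycles_shifted boundaries_shifted by simp
qed

theorem acyclic_shifted: "acyclic_complex C d \<Longrightarrow> acyclic_complex C' d'"
  unfolding acyclic_complex_def cycles_shifted boundaries_shifted by blast

end

text \<open>The kernel D of a projection P compatible with d is a subcomplex, and the image E of P,
  with differential P \<circ> d, realises the quotient C/D. By the long exact homology sequence of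
  0 \<rightarrow> D \<rightarrow> C \<rightarrow> E \<rightarrow> 0, acyclicity of one end identifies the homology of C with that of the other.\<close>

locale split_chain_complex = finite_chain_complex +
  fixes P :: "'b \<Rightarrow> 'b"
  assumes linear_P: "Vector_Spaces.linear scale scale P"
    and P_closed: "x \<in> C p \<Longrightarrow> P x \<in> C p"
    and P_P: "x \<in> C p \<Longrightarrow> P (P x) = P x"
    and P_d_kernel: "x \<in> C (p + 1) \<Longrightarrow> P x = 0 \<Longrightarrow> P (d x) = 0"
begin

definition D :: "int \<Rightarrow> 'b set" where
  "D p = {x \<in> C p. P x = 0}"

definition E :: "int \<Rightarrow> 'b set" where
  "E p = {x \<in> C p. P x = x}"

lemma P_d_P: "x \<in> C (p + 1) \<Longrightarrow> P (d (P x)) = P (d x)"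
proof -
  interpret d: linear scale scale d by (rule linear_d)
  interpret P: linear scale scale P by (rule linear_P)
  assume x: "x \<in> C (p + 1)"
  have "x - P x \<in> C (p + 1)"
    using subspace_diff[OF subspace_C x P_closed[OF x]] .
  moreover have "P (x - P x) = 0"
    using P_P[OF x] by (simp add: P.diff)
  ultimately have "P (d (x - P x)) = 0"
    by (rule P_d_kernel)
  then show ?thesis
    by (simp add: d.diff P.diff)
qed

lemma dim_cycles_split: "dim (cycles C d p) = dim (cycles D d p) + dim (P ` cycles C d p)"
proof -
  obtain T where "finite T" "cycles C d p \<subseteq> span T"
    using finite_span_cycles by blast
  from rank_nullity[OF linear_P subspace_cycles this] show ?thesis
    by (simp add: cycles_def D_def conj_ac)
qed

lemma dim_boundaries_split:
  "dim (boundaries C d p) = dim {x \<in> boundaries C d p. P x = 0} + dim (P ` boundaries C d p)"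
proof -
  obtain T where "finite T" "boundaries C d p \<subseteq> span T"
    using finite_span_boundaries by blast
  from rank_nullity[OF linear_P subspace_boundaries this] show ?thesis .
qed

lemma P_boundaries: "P ` boundaries C d p = boundaries E (\<lambda>x. P (d x)) p"
proof
  show "P ` boundaries C d p \<subseteq> boundaries E (\<lambda>x. P (d x)) p"
  proof
    fix y assume "y \<in> P ` boundaries C d p"
    then obtain x where x: "x \<in> C (p + 1)" "y = P (d x)"
      by (auto simp: boundaries_def)
    then have "P x \<in> E (p + 1)" and "y = P (d (P x))"
      using P_closed P_P P_d_P by (auto simp: E_def)
    then show "y \<in> boundaries E (\<lambda>x. P (d x)) p"
      by (auto simp: boundaries_def)
  qed
qed (auto simp: boundaries_def E_def)

lemma P_cycles_subset: "P ` cycles C d p \<subseteq> cycles E (\<lambda>x. P (d x)) p"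
proof
  interpret P: linear scale scale P by (rule linear_P)
  fix y assume "y \<in> P ` cycles C d p"
  then obtain x where x: "x \<in> C p" "d x = 0" "y = P x"
    by (auto simp: cycles_def)
  then have "P (d (P x)) = 0"
    using P_d_P[of x "p - 1"] by simp
  then show "y \<in> cycles E (\<lambda>x. P (d x)) p"
    using x P_closed P_P by (auto simp: cycles_def E_def)
qed

theorem homology_dim_eq_kernel:
  assumes "acyclic_complex E (\<lambda>x. P (d x))"
  shows "homology_dim C d p = homology_dim D d p"
proof -
  interpret d: linear scale scale d by (rule linear_d)
  interpret P: linear scale scale P by (rule linear_P)
  have "P ` boundaries C d p \<subseteq> P ` cycles C d p"
    using boundaries_subset_cycles by (rule image_mono)
  then have cyc: "P ` cycles C d p = P ` boundaries C d p"
    using assms[unfolded acyclic_complex_def, rule_format, of p] P_cycles_subset[of p]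
      P_boundaries[of p] by blast
  have "{x \<in> boundaries C d p. P x = 0} = boundaries D d p"
  proof
    show "boundaries D d p \<subseteq> {x \<in> boundaries C d p. P x = 0}"
      using P_d_kernel by (auto simp: boundaries_def D_def)
    show "{x \<in> boundaries C d p. P x = 0} \<subseteq> boundaries D d p"
    proof
      fix z assume "z \<in> {x \<in> boundaries C d p. P x = 0}"
      then obtain y where y: "y \<in> C (p + 1)" "z = d y" "P (d y) = 0"
        by (auto simp: boundaries_def)
      \<comment> \<open>correct y by a boundary so that it lies in D\<close>
      have "P y \<in> cycles E (\<lambda>x. P (d x)) (p + 1)"
        using y P_closed P_P P_d_P by (auto simp: cycles_def E_def)
      then obtain w where w: "w \<in> C (p + 1 + 1)" "P y = P (d w)"
        using assms by (fastforce simp: acyclic_complex_def boundaries_def E_def)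
      have "y - d w \<in> D (p + 1)"
        using y(1) w d_closed subspace_diff[OF subspace_C] by (auto simp: D_def P.diff)
      moreover have "d (y - d w) = z"
        using y d_d[OF w(1)] by (simp add: d.diff)
      ultimately show "z \<in> boundaries D d p"
        unfolding boundaries_def by blast
    qed
  qed
  moreover have "cycles D d p = {x \<in> cycles C d p. P x = 0}"
    by (auto simp: cycles_def D_def)
  ultimately show ?thesis
    using dim_cycles_split[of p] dim_boundaries_split[of p]
    by (simp add: homology_dim_def cyc)
qed

theorem homology_dim_eq_image:
  assumes "acyclic_complex D d"
  shows "homology_dim C d p = homology_dim E (\<lambda>x. P (d x)) p"
proof -
  interpret d: linear scale scale d by (rule linear_d)
  interpret P: linear scale scale P by (rule linear_P)
  have "cycles E (\<lambda>x. P (d x)) p \<subseteq> P ` cycles C d p"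
  proof
    fix e assume "e \<in> cycles E (\<lambda>x. P (d x)) p"
    then have e: "e \<in> C p" "P e = e" "P (d e) = 0"
      by (auto simp: cycles_def E_def)
    \<comment> \<open>d e is a cycle of D, hence bounds some y in D, and e - y is a cycle lifting e\<close>
    have "d e \<in> cycles D d (p - 1)"
      using e d_closed' d_d[of e "p - 1"] by (auto simp: cycles_def D_def)
    then obtain y where y: "y \<in> D p" "d e = d y"
      using assms[unfolded acyclic_complex_def, rule_format, of "p - 1"]
      by (auto simp: boundaries_def)
    have "e - y \<in> cycles C d p"
      using e y subspace_diff[OF subspace_C] by (auto simp: cycles_def D_def d.diff)
    moreover have "P (e - y) = e"
      using e y by (simp add: D_def P.diff)
    ultimately show "e \<in> P ` cycles C d p"
      by (metis image_eqI)
  qed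
  then have cyc: "P ` cycles C d p = cycles E (\<lambda>x. P (d x)) p"
    using P_cycles_subset by blast
  have "{x \<in> boundaries C d p. P x = 0} = cycles D d p"
  proof
    show "{x \<in> boundaries C d p. P x = 0} \<subseteq> cycles D d p"
      using boundaries_subset_cycles[of p] by (auto simp: cycles_def D_def)
    show "cycles D d p \<subseteq> {x \<in> boundaries C d p. P x = 0}"
      using assms by (auto simp: acyclic_complex_def boundaries_def cycles_def D_def)
  qed
  moreover have "cycles D d p = {x \<in> cycles C d p. P x = 0}"
    by (auto simp: cycles_def D_def)
  ultimately show ?thesis
    using dim_cycles_split[of p] dim_boundaries_split[of p]
    by (simp add: homology_dim_def cyc P_boundaries)
qed

end

section \<open>Reduced simplicial chains\<close>

interpretation VS: vector_space "fscale :: 'a::field \<Rightarrow> (nat set \<Rightarrow> 'a) \<Rightarrow> _"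
  by unfold_locales (auto simp: fscale_def algebra_simps fun_eq_iff)

lemma rhdim_eq_homology_dim:
  "rhdim TYPE('a::field) K p = VS.homology_dim (chains TYPE('a) K) (bd K) p"
  by (simp add: rhdim_def VS.homology_dim_def cycles_def boundaries_def)

definition simplicial_complex :: "nat set set \<Rightarrow> bool" where
  "simplicial_complex K \<longleftrightarrow> finite K \<and> (\<forall>F\<in>K. \<forall>G\<subseteq>F. G \<in> K)"

lemma simplicial_complex_subface: "simplicial_complex K \<Longrightarrow> F \<in> K \<Longrightarrow> G \<subseteq> F \<Longrightarrow> G \<in> K"
  by (auto simp: simplicial_complex_def)

lemma simplicial_complex_finite_face:
  assumes "simplicial_complex K" "F \<in> K"
  shows "finite F"
proof -
  have "Pow F \<subseteq> K"
    using assms by (auto simp: simplicial_complex_def)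
  then show ?thesis
    using assms(1) finite_subset by (fastforce simp: simplicial_complex_def)
qed

lemma simplicial_complex_finite_vertices: "simplicial_complex K \<Longrightarrow> finite (\<Union>K)"
  by (auto simp: simplicial_complex_def simplicial_complex_finite_face)

lemma card_face_remove_vertex:
  "simplicial_complex K \<Longrightarrow> F \<in> K \<Longrightarrow> v \<in> F \<Longrightarrow> card F = card (F - {v}) + 1"
  by (metis Suc_eq_plus1 card_Suc_Diff1 simplicial_complex_finite_face)

definition insert_sign :: "nat set \<Rightarrow> nat \<Rightarrow> 'a::comm_ring_1" where
  "insert_sign G v = (-1) ^ card {u \<in> G. u < v}"

lemma insert_sign_square: "insert_sign G v * insert_sign G v = 1"
  by (simp add: insert_sign_def power_mult_distrib[symmetric])

lemma insert_sign_nonzero: "insert_sign G v \<noteq> (0::'a::comm_ring_1)"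
  using insert_sign_square[of G v] by (metis mult_zero_left zero_neq_one)

lemma insert_sign_insert:
  assumes "finite G" "u \<notin> G"
  shows "insert_sign (insert u G) v = (if u < v then - insert_sign G v else insert_sign G v)"
proof -
  have "{w \<in> insert u G. w < v} = (if u < v then insert u {w \<in> G. w < v} else {w \<in> G. w < v})"
    by auto
  then show ?thesis
    using assms by (simp add: insert_sign_def)
qed

lemma insert_sign_swap:
  assumes "finite H" "w \<notin> H" "x \<notin> H" "w \<noteq> x"
  shows "insert_sign H w * insert_sign (insert w H) x
    = - (insert_sign H x * insert_sign (insert x H) w :: 'a::comm_ring_1)"
  using assms by (cases "w < x") (simp_all add: insert_sign_insert mult_ac)

lemma bd_eq_sum:
  "bd K c G = (if G \<in> K then
      (\<Sum>v\<in>\<Union>K - G. if insert v G \<in> K then insert_sign G v * c (insert v G) else 0) else 0)"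
  unfolding bd_def insert_sign_def ..

lemma bd_eq_sum_superset:
  assumes "finite U" "\<Union>K \<subseteq> U"
  shows "bd K c G = (if G \<in> K then
      (\<Sum>v\<in>U - G. if insert v G \<in> K then insert_sign G v * c (insert v G) else 0) else 0)"
  unfolding bd_eq_sum
  by (rule if_cong[OF refl _ refl], rule sum.mono_neutral_left) (use assms in auto)

lemma bd_nonzero_face: "bd K c G \<noteq> 0 \<Longrightarrow> G \<in> K"
  by (auto simp: bd_def split: if_splits)

lemma linear_fscaleI:
  assumes "\<And>x y. f (x + y) = f x + f y" and "\<And>a x. f (fscale a x) = fscale a (f x)"
  shows "Vector_Spaces.linear fscale fscale (f :: (nat set \<Rightarrow> 'a::field) \<Rightarrow> nat set \<Rightarrow> 'a)"
  unfolding Vector_Spaces.linear_iff using VS.vector_space_axioms assms by blast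

lemma linear_bd: "Vector_Spaces.linear fscale fscale (bd K :: (nat set \<Rightarrow> 'a::field) \<Rightarrow> _)"
  by (rule linear_fscaleI)
    (auto simp: fun_eq_iff bd_def fscale_def sum.distrib[symmetric] distrib_left sum_distrib_left
      intro!: sum.cong)

lemma bd_diff: "bd K (x - y) = bd K x - bd K (y :: nat set \<Rightarrow> 'a::field)"
  by (rule module_hom.diff[OF linear_bd[folded module_hom_iff_linear]])

lemma subspace_chains: "VS.subspace (chains T K p)"
  unfolding VS.subspace_def chains_def fscale_def
  by (auto, metis add.left_neutral)

lemma sum_fun_apply: "(\<Sum>a\<in>A. f a) x = (\<Sum>a\<in>A. f a x)"
  by (induction A rule: infinite_finite_induct) auto

lemma finite_span_chains:
  assumes "finite K"
  shows "\<exists>B. finite B \<and> chains TYPE('a::field) K p \<subseteq> VS.span B"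
proof (intro exI conjI)
  define e :: "nat set \<Rightarrow> nat set \<Rightarrow> 'a" where "e F = (\<lambda>G. if G = F then 1 else 0)" for F
  have fin: "finite (faces K p)"
    using assms by (simp add: faces_def)
  then show "finite (e ` faces K p)"
    by simp
  show "chains TYPE('a) K p \<subseteq> VS.span (e ` faces K p)"
  proof
    fix c assume c: "c \<in> chains TYPE('a) K p"
    have "c = (\<Sum>F\<in>faces K p. fscale (c F) (e F))"
    proof
      fix G
      have "(\<Sum>F\<in>faces K p. fscale (c F) (e F)) G = (\<Sum>F\<in>faces K p. if G = F then c F else 0)"
        by (simp add: sum_fun_apply fscale_def e_def if_distrib cong: if_cong)
      then show "c G = (\<Sum>F\<in>faces K p. fscale (c F) (e F)) G"
        using c fin by (auto simp: chains_def)
    qed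
    moreover have "(\<Sum>F\<in>faces K p. fscale (c F) (e F)) \<in> VS.span (e ` faces K p)"
      by (intro VS.span_sum VS.span_scale VS.span_base) auto
    ultimately show "c \<in> VS.span (e ` faces K p)"
      by simp
  qed
qed

lemma bd_chains:
  assumes K: "simplicial_complex K" and c: "c \<in> chains T K (p + 1)"
  shows "bd K c \<in> chains T K p"
  unfolding chains_def
proof (intro CollectI allI impI)
  fix G assume nz: "bd K c G \<noteq> 0"
  then have G: "G \<in> K"
    by (rule bd_nonzero_face)
  with nz have "(\<Sum>v\<in>\<Union>K - G. if insert v G \<in> K then insert_sign G v * c (insert v G) else 0) \<noteq> 0"
    by (simp add: bd_eq_sum)
  then obtain v where "v \<in> \<Union>K - G"
      "(if insert v G \<in> K then insert_sign G v * c (insert v G) else 0) \<noteq> 0"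
    by (rule sum.not_neutral_contains_not_neutral)
  then have v: "v \<in> \<Union>K - G" "insert v G \<in> K" "c (insert v G) \<noteq> 0"
    by (auto split: if_splits)
  then have "insert v G \<in> faces K (p + 1)"
    using c by (auto simp: chains_def)
  then show "G \<in> faces K p"
    using G v(1) simplicial_complex_finite_face[OF K G] by (auto simp: faces_def)
qed

lemma sum_off_diagonal_antisym:
  fixes g :: "'i \<Rightarrow> 'i \<Rightarrow> 'a::ab_group_add"
  assumes "finite A" and "\<And>w x. w \<in> A \<Longrightarrow> x \<in> A \<Longrightarrow> w \<noteq> x \<Longrightarrow> g w x = - g x w"
  shows "(\<Sum>w\<in>A. \<Sum>x\<in>A - {w}. g w x) = 0"
  using assms
proof (induction A rule: finite_induct)
  case (insert a A)
  have "(\<Sum>x\<in>insert a A - {w}. g w x) = g w a + (\<Sum>x\<in>A - {w}. g w x)" if "w \<in> A" for w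
  proof -
    have "insert a A - {w} = insert a (A - {w})"
      using that insert.hyps(2) by auto
    then show ?thesis
      using insert.hyps by simp
  qed
  moreover have "insert a A - {a} = A"
    using insert.hyps(2) by simp
  ultimately have "(\<Sum>w\<in>insert a A. \<Sum>x\<in>insert a A - {w}. g w x)
      = (\<Sum>x\<in>A. g a x + g x a) + (\<Sum>w\<in>A. \<Sum>x\<in>A - {w}. g w x)"
    using insert.hyps by (simp add: sum.distrib add_ac)
  also have "\<dots> = 0"
  proof -
    have "g a x + g x a = 0" if "x \<in> A" for x
    proof -
      have "g a x = - g x a"
        using insert.prems[of a x] that insert.hyps(2) by auto
      then show ?thesis
        by simp
    qed
    moreover have "(\<Sum>w\<in>A. \<Sum>x\<in>A - {w}. g w x) = 0"
      using insert.IH insert.prems by blast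
    ultimately show ?thesis
      by simp
  qed
  finally show ?case .
qed simp

lemma bd_bd:
  fixes c :: "nat set \<Rightarrow> 'a::field"
  assumes K: "simplicial_complex K"
  shows "bd K (bd K c) = 0"
proof
  fix H
  show "bd K (bd K c) H = 0 H"
  proof (cases "H \<in> K")
    case False
    then show ?thesis
      by (simp add: bd_def)
  next
    case H: True
    let ?U = "\<Union>K - H"
    have "finite H"
      using simplicial_complex_finite_face[OF K H] .
    define g where "g w x = (if insert x (insert w H) \<in> K
        then insert_sign H w * insert_sign (insert w H) x * c (insert x (insert w H)) else 0)"
      for w x
    have inner: "(if insert w H \<in> K then insert_sign H w * bd K c (insert w H) else 0)
        = (\<Sum>x\<in>?U - {w}. g w x)" if w: "w \<in> ?U" for w
    proof (cases "insert w H \<in> K")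
      case True
      have "\<Union>K - insert w H = ?U - {w}"
        by auto
      then have "insert_sign H w * bd K c (insert w H) = (\<Sum>x\<in>?U - {w}. insert_sign H w *
          (if insert x (insert w H) \<in> K then insert_sign (insert w H) x * c (insert x (insert w H)) else 0))"
        using True by (simp add: bd_eq_sum sum_distrib_left)
      also have "\<dots> = (\<Sum>x\<in>?U - {w}. g w x)"
        by (rule sum.cong) (auto simp: g_def mult.assoc)
      finally show ?thesis
        using True by simp
    next
      case False
      then have "insert x (insert w H) \<notin> K" for x
        using simplicial_complex_subface[OF K] by blast
      then show ?thesis
        using False by (simp add: g_def)
    qed
    have "bd K (bd K c) H
        = (\<Sum>w\<in>?U. if insert w H \<in> K then insert_sign H w * bd K c (insert w H) else 0)"
      using H bd_eq_sum[of K "bd K c" H] by simp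
    also have "\<dots> = (\<Sum>w\<in>?U. \<Sum>x\<in>?U - {w}. g w x)"
      using inner by (rule sum.cong[OF refl])
    also have "\<dots> = 0"
    proof (rule sum_off_diagonal_antisym)
      show "finite ?U"
        using simplicial_complex_finite_vertices[OF K] by simp
      fix w x assume "w \<in> ?U" "x \<in> ?U" "w \<noteq> x"
      then have "insert_sign H w * insert_sign (insert w H) x
          = - (insert_sign H x * insert_sign (insert x H) w :: 'a)"
        using \<open>finite H\<close> by (intro insert_sign_swap) auto
      moreover have "insert x (insert w H) = insert w (insert x H)"
        by auto
      ultimately show "g w x = - g x w"
        by (simp add: g_def)
    qed
    finally show ?thesis
      by simp
  qed
qed

lemma finite_chain_complex_chains:
  assumes K: "simplicial_complex K"
  shows "finite_chain_complex fscale (chains TYPE('a::field) K) (bd K)"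
proof (intro finite_chain_complex.intro finite_chain_complex_axioms.intro)
  show "\<exists>B. finite B \<and> chains TYPE('a) K p \<subseteq> VS.span B" for p
    using K finite_span_chains by (auto simp: simplicial_complex_def)
qed (simp_all add: VS.vector_space_axioms subspace_chains linear_bd bd_chains[OF K] bd_bd[OF K])

lemma rhdim_acyclic:
  assumes "simplicial_complex K" and "acyclic_complex (chains TYPE('a::field) K) (bd K)"
  shows "rhdim TYPE('a) K p = 0"
  using finite_chain_complex.homology_dim_acyclic[OF finite_chain_complex_chains] assms
  by (simp add: rhdim_eq_homology_dim)

lemma rhdim_empty_complex: "rhdim TYPE('a::field) {} p = 0"
proof (rule rhdim_acyclic)
  show "simplicial_complex {}"
    by (simp add: simplicial_complex_def)
  have "chains TYPE('a) {} q = {0}" for q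
    by (auto simp: chains_def faces_def)
  moreover have "bd {} (0 :: nat set \<Rightarrow> 'a) = 0"
    by (simp add: bd_def fun_eq_iff)
  ultimately show "acyclic_complex (chains TYPE('a) {}) (bd {})"
    by (auto simp: acyclic_complex_def cycles_def boundaries_def)
qed

section \<open>Cones, joins and the star of a vertex\<close>

definition star_proj :: "nat \<Rightarrow> (nat set \<Rightarrow> 'a::zero) \<Rightarrow> nat set \<Rightarrow> 'a" where
  "star_proj v c = (\<lambda>F. if v \<in> F then c F else 0)"

definition join_vertex :: "nat set set \<Rightarrow> nat \<Rightarrow> (nat set \<Rightarrow> 'a::comm_ring_1) \<Rightarrow> nat set \<Rightarrow> 'a" where
  "join_vertex K v c = (\<lambda>F. if v \<in> F \<and> F \<in> K then insert_sign (F - {v}) v * c (F - {v}) else 0)"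

lemma linear_star_proj: "Vector_Spaces.linear fscale fscale (star_proj v :: (nat set \<Rightarrow> 'a::field) \<Rightarrow> _)"
  by (rule linear_fscaleI) (simp_all add: star_proj_def fscale_def fun_eq_iff)

lemma linear_join_vertex:
  "Vector_Spaces.linear fscale fscale (join_vertex K v :: (nat set \<Rightarrow> 'a::field) \<Rightarrow> _)"
  by (rule linear_fscaleI) (simp_all add: join_vertex_def fscale_def fun_eq_iff distrib_left mult.left_commute)

lemma star_proj_join_vertex: "star_proj v (join_vertex K v c) = join_vertex K v c"
  by (simp add: star_proj_def join_vertex_def fun_eq_iff)

lemma join_vertex_chains:
  assumes K: "simplicial_complex K"
    and c: "\<And>G. c G \<noteq> 0 \<Longrightarrow> v \<notin> G \<Longrightarrow> int (card G) = p"
  shows "join_vertex K v c \<in> chains T K p"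
  unfolding chains_def
proof (intro CollectI allI impI)
  fix F assume "join_vertex K v c F \<noteq> 0"
  then have F: "v \<in> F" "F \<in> K" "c (F - {v}) \<noteq> 0"
    by (auto simp: join_vertex_def split: if_splits)
  have "int (card (F - {v})) = p"
    by (rule c[OF F(3)]) simp
  then have "int (card F) = p + 1"
    using card_face_remove_vertex[OF K F(2,1)] by linarith
  then show "F \<in> faces K p"
    using F(2) by (simp add: faces_def)
qed

lemma bd_supported_in_star:
  assumes K: "simplicial_complex K" and e: "\<And>F. v \<notin> F \<Longrightarrow> e F = 0"
    and G: "G \<in> K" "v \<notin> G" "insert v G \<in> K"
  shows "bd K e G = insert_sign G v * e (insert v G)"
proof -
  have "bd K e G = (\<Sum>u\<in>\<Union>K - G. if insert u G \<in> K then insert_sign G u * e (insert u G) else 0)"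
    using G(1) by (simp add: bd_eq_sum)
  also have "\<dots> = (\<Sum>u\<in>\<Union>K - G. if u = v then insert_sign G v * e (insert v G) else 0)"
    by (rule sum.cong[OF refl]) (use e G in auto)
  also have "\<dots> = insert_sign G v * e (insert v G)"
    using G simplicial_complex_finite_vertices[OF K] by (auto simp: sum.delta)
  finally show ?thesis .
qed

lemma bd_join_vertex_off_star:
  assumes "simplicial_complex K" "G \<in> K" "v \<notin> G" "insert v G \<in> K"
  shows "bd K (join_vertex K v c) G = (c G :: 'a::field)"
proof -
  have "bd K (join_vertex K v c) G = insert_sign G v * join_vertex K v c (insert v G)"
    using assms by (intro bd_supported_in_star) (auto simp: join_vertex_def)
  also have "\<dots> = c G"
    using assms(3,4) by (simp add: join_vertex_def mult.assoc[symmetric] insert_sign_square)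
  finally show ?thesis .
qed

lemma cycle_supported_in_star_is_zero:
  assumes K: "simplicial_complex K" and w: "w \<in> chains T K p" "bd K w = 0"
    and star: "\<And>F. v \<notin> F \<Longrightarrow> w F = (0::'a::field)"
  shows "w = 0"
proof
  fix F
  show "w F = 0 F"
  proof (cases "v \<in> F \<and> F \<in> K")
    case True
    then have "F - {v} \<in> K" "insert v (F - {v}) = F"
      using simplicial_complex_subface[OF K] by auto
    then have "bd K w (F - {v}) = insert_sign (F - {v}) v * w F"
      using bd_supported_in_star[OF K star, where G = "F - {v}"] True by simp
    then show ?thesis
      using w(2) by (simp add: insert_sign_nonzero)
  next
    case False
    then show ?thesis
      using w(1) star by (auto simp: chains_def faces_def)
  qed
qed

text \<open>Coning a cycle z off with the apex a gives a chain whose boundary agrees with z away from a;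
  the difference is a cycle supported in the star of a, hence zero.\<close>

lemma acyclic_cone:
  assumes K: "simplicial_complex K" and cone: "\<And>F. F \<in> K \<Longrightarrow> insert a F \<in> K"
  shows "acyclic_complex (chains TYPE('a::field) K) (bd K)"
  unfolding acyclic_complex_def cycles_def boundaries_def
proof (intro allI subsetI, elim CollectE conjE)
  fix p and z :: "nat set \<Rightarrow> 'a"
  assume z: "z \<in> chains TYPE('a) K p" "bd K z = 0"
  let ?x = "join_vertex K a z"
  have x: "?x \<in> chains TYPE('a) K (p + 1)"
    using z(1) by (intro join_vertex_chains[OF K]) (auto simp: chains_def faces_def)
  have "z - bd K ?x = 0"
  proof (rule cycle_supported_in_star_is_zero[OF K])
    show "z - bd K ?x \<in> chains TYPE('a) K p"
      using z(1) bd_chains[OF K x] VS.subspace_diff[OF subspace_chains] by blast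
    show "bd K (z - bd K ?x) = 0"
      using z(2) bd_bd[OF K] by (simp add: bd_diff)
    show "(z - bd K ?x) F = 0" if "a \<notin> F" for F
    proof (cases "F \<in> K")
      case True
      then show ?thesis
        using bd_join_vertex_off_star[OF K True that cone[OF True], where c = z] by simp
    next
      case False
      then have "z F = 0" and "bd K ?x F = 0"
        using z(1) bd_nonzero_face[of K ?x F] by (auto simp: chains_def faces_def)
      then show ?thesis
        by simp
    qed
  qed
  then show "z \<in> bd K ` chains TYPE('a) K (p + 1)"
    using x by force
qed

section \<open>Deletion and link\<close>

definition deletion :: "nat set set \<Rightarrow> nat \<Rightarrow> nat set set" where
  "deletion K v = {F \<in> K. v \<notin> F}"

definition link :: "nat set set \<Rightarrow> nat \<Rightarrow> nat set set" where
  "link K v = {G. v \<notin> G \<and> insert v G \<in> K}"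

lemma simplicial_complex_link:
  assumes K: "simplicial_complex K"
  shows "simplicial_complex (link K v)"
proof -
  have "link K v \<subseteq> (\<lambda>F. F - {v}) ` K"
  proof
    fix G assume "G \<in> link K v"
    then have "v \<notin> G" "insert v G \<in> K"
      by (auto simp: link_def)
    then show "G \<in> (\<lambda>F. F - {v}) ` K"
      by (metis Diff_insert_absorb image_eqI)
  qed
  then have "finite (link K v)"
    using K finite_surj by (auto simp: simplicial_complex_def)
  moreover have "G \<in> link K v" if "F \<in> link K v" "G \<subseteq> F" for F G
  proof -
    have "insert v G \<in> K"
      using that simplicial_complex_subface[OF K, of "insert v F" "insert v G"]
      by (auto simp: link_def)
    then show ?thesis
      using that by (auto simp: link_def)
  qed
  ultimately show ?thesis
    by (auto simp: simplicial_complex_def)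
qed

lemma star_proj_chains: "c \<in> chains T K p \<Longrightarrow> star_proj v c \<in> chains T K p"
  by (auto simp: chains_def star_proj_def)

lemma chains_deletion: "chains T (deletion K v) p = {x \<in> chains T K p. star_proj v x = 0}"
  by (auto simp: chains_def faces_def deletion_def star_proj_def fun_eq_iff)

lemma star_proj_bd_of_off_star:
  assumes "\<And>F. v \<in> F \<Longrightarrow> x F = (0::'a::field)"
  shows "star_proj v (bd K x) = 0"
proof
  fix G
  have "v \<in> G \<Longrightarrow> bd K x G = 0"
    using assms by (auto simp: bd_eq_sum intro!: sum.neutral)
  then show "star_proj v (bd K x) G = 0 G"
    by (simp add: star_proj_def)
qed

lemma bd_deletion:
  assumes K: "simplicial_complex K" and x: "\<And>F. v \<in> F \<Longrightarrow> x F = (0::'a::field)"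
  shows "bd (deletion K v) x = bd K x"
proof
  fix G
  show "bd (deletion K v) x G = bd K x G"
  proof (cases "G \<in> K \<and> v \<notin> G")
    case True
    have "\<Union>(deletion K v) \<subseteq> \<Union>K"
      by (auto simp: deletion_def)
    moreover have "G \<in> deletion K v"
      using True by (simp add: deletion_def)
    ultimately have "bd (deletion K v) x G
        = (\<Sum>u\<in>\<Union>K - G. if insert u G \<in> deletion K v then insert_sign G u * x (insert u G) else 0)"
      using bd_eq_sum_superset[OF simplicial_complex_finite_vertices[OF K], of "deletion K v" x G]
      by simp
    also have "\<dots> = bd K x G"
      using True x by (auto simp: bd_eq_sum deletion_def intro!: sum.cong)
    finally show ?thesis .
  next
    case False
    have "star_proj v (bd K x) G = 0"
      by (simp add: star_proj_bd_of_off_star[OF x])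
    then have "bd K x G = 0" if "v \<in> G"
      using that by (simp add: star_proj_def)
    then show ?thesis
      using False by (auto simp: bd_def deletion_def)
  qed
qed

definition contract_vertex :: "nat set set \<Rightarrow> nat \<Rightarrow> (nat set \<Rightarrow> 'a::comm_ring_1) \<Rightarrow> nat set \<Rightarrow> 'a" where
  "contract_vertex K v x = (\<lambda>G. if v \<notin> G \<and> insert v G \<in> K then insert_sign G v * x (insert v G) else 0)"

lemma contract_vertex_chains:
  assumes K: "simplicial_complex K" and x: "x \<in> chains T K p"
  shows "contract_vertex K v x \<in> chains T (link K v) (p - 1)"
  unfolding chains_def
proof (intro CollectI allI impI)
  fix G assume "contract_vertex K v x G \<noteq> 0"
  then have G: "v \<notin> G" "insert v G \<in> K" "x (insert v G) \<noteq> 0"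
    by (auto simp: contract_vertex_def split: if_splits)
  then have "int (card (insert v G)) = p + 1"
    using x by (auto simp: chains_def faces_def)
  moreover have "finite G"
    using simplicial_complex_finite_face[OF K G(2)] by simp
  ultimately show "G \<in> faces (link K v) (p - 1)"
    using G(1,2) by (simp add: faces_def link_def)
qed

lemma join_contract_vertex:
  assumes x: "x \<in> chains T K p" and star: "star_proj v x = x"
  shows "join_vertex K v (contract_vertex K v x) = x"
proof
  fix F
  show "join_vertex K v (contract_vertex K v x) F = x F"
  proof (cases "v \<in> F \<and> F \<in> K")
    case True
    then have "insert v (F - {v}) = F"
      by auto
    then show ?thesis
      using True
      by (simp add: join_vertex_def contract_vertex_def mult.assoc[symmetric] insert_sign_square)
  next
    case False
    have "x F = 0" if "v \<notin> F"
      using fun_cong[OF star, of F] that by (simp add: star_proj_def)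
    then have "x F = 0"
      using False x by (auto simp: chains_def faces_def)
    then show ?thesis
      using False by (auto simp: join_vertex_def)
  qed
qed

lemma join_vertex_image:
  assumes K: "simplicial_complex K"
  shows "{x \<in> chains TYPE('a::field) K p. star_proj v x = x}
    = join_vertex K v ` chains TYPE('a) (link K v) (p - 1)"
proof
  show "join_vertex K v ` chains TYPE('a) (link K v) (p - 1) \<subseteq> {x \<in> chains TYPE('a) K p. star_proj v x = x}"
  proof
    fix x assume "x \<in> join_vertex K v ` chains TYPE('a) (link K v) (p - 1)"
    then obtain c where c: "c \<in> chains TYPE('a) (link K v) (p - 1)" "x = join_vertex K v c"
      by blast
    have "join_vertex K v c \<in> chains TYPE('a) K p"
    proof (rule join_vertex_chains[OF K])
      fix G assume "c G \<noteq> 0"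
      then show "int (card G) = p"
        using c(1) by (auto simp: chains_def faces_def)
    qed
    then show "x \<in> {x \<in> chains TYPE('a) K p. star_proj v x = x}"
      using c(2) by (simp add: star_proj_join_vertex)
  qed
  show "{x \<in> chains TYPE('a) K p. star_proj v x = x} \<subseteq> join_vertex K v ` chains TYPE('a) (link K v) (p - 1)"
    using join_contract_vertex contract_vertex_chains[OF K] by (blast intro: image_eqI[OF sym])
qed

lemma join_vertex_eq_zero:
  assumes c: "\<And>G. c G \<noteq> 0 \<Longrightarrow> G \<in> link K v" and "join_vertex K v c = (0 :: nat set \<Rightarrow> 'a::field)"
  shows "c = 0"
proof
  fix G
  show "c G = 0 G"
  proof (rule ccontr)
    assume "c G \<noteq> 0 G"
    then have G: "c G \<noteq> 0" "v \<notin> G" "insert v G \<in> K"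
      using c by (auto simp: link_def)
    then have "join_vertex K v c (insert v G) = insert_sign G v * c G"
      by (simp add: join_vertex_def)
    then show False
      using assms(2) G(1) by (simp add: insert_sign_nonzero)
  qed
qed

lemma bd_link:
  assumes K: "simplicial_complex K" and H: "v \<notin> H" "insert v H \<in> K"
  shows "bd (link K v) c H = (\<Sum>w\<in>\<Union>K - insert v H.
    if insert w (insert v H) \<in> K then insert_sign H w * c (insert w H) else 0)"
proof -
  have "\<Union>(link K v) \<subseteq> \<Union>K"
    by (auto simp: link_def)
  moreover have "H \<in> link K v"
    using H by (simp add: link_def)
  ultimately have "bd (link K v) c H
      = (\<Sum>w\<in>\<Union>K - H. if insert w H \<in> link K v then insert_sign H w * c (insert w H) else 0)"
    using bd_eq_sum_superset[OF simplicial_complex_finite_vertices[OF K], of "link K v" c H] by simp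
  also have "\<Union>K - H = insert v (\<Union>K - insert v H)"
    using H by auto
  also have "(\<Sum>w\<in>insert v (\<Union>K - insert v H).
        if insert w H \<in> link K v then insert_sign H w * c (insert w H) else 0)
      = (\<Sum>w\<in>\<Union>K - insert v H. if insert w H \<in> link K v then insert_sign H w * c (insert w H) else 0)"
    using simplicial_complex_finite_vertices[OF K] by (simp add: link_def)
  also have "\<dots> = (\<Sum>w\<in>\<Union>K - insert v H.
      if insert w (insert v H) \<in> K then insert_sign H w * c (insert w H) else 0)"
    by (rule sum.cong) (use H(1) in \<open>auto simp: link_def insert_commute\<close>)
  finally show ?thesis .
qed

lemma star_proj_bd_join_vertex:
  fixes c :: "nat set \<Rightarrow> 'a::field"
  assumes K: "simplicial_complex K"
  shows "star_proj v (bd K (join_vertex K v c)) = - join_vertex K v (bd (link K v) c)"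
proof
  fix G
  show "star_proj v (bd K (join_vertex K v c)) G = (- join_vertex K v (bd (link K v) c)) G"
  proof (cases "v \<in> G \<and> G \<in> K")
    case False
    then show ?thesis
      by (auto simp: star_proj_def join_vertex_def bd_def)
  next
    case True
    define H where "H = G - {v}"
    have G: "G = insert v H" "v \<notin> H"
      using True by (auto simp: H_def)
    have "finite H"
      using simplicial_complex_finite_face[OF K] True by (simp add: H_def)
    have summand: "(if insert w G \<in> K then insert_sign G w * join_vertex K v c (insert w G) else 0)
        = - (insert_sign H v * (if insert w G \<in> K then insert_sign H w * c (insert w H) else 0))"
      if w: "w \<in> \<Union>K - G" for w
    proof -
      have "w \<noteq> v" "w \<notin> H"
        using w G by auto
      \<comment> \<open>moving v past w and w past v: exactly one of the two signs flips\<close>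
      have "insert_sign G w = (if v < w then - insert_sign H w else (insert_sign H w :: 'a))"
        using insert_sign_insert[OF \<open>finite H\<close> G(2), of w] G(1) by simp
      moreover have "insert_sign (insert w H) v = (if w < v then - insert_sign H v else (insert_sign H v :: 'a))"
        using insert_sign_insert[OF \<open>finite H\<close> \<open>w \<notin> H\<close>, of v] by simp
      moreover have "insert w G - {v} = insert w H" "v \<in> insert w G"
        using G \<open>w \<noteq> v\<close> by auto
      ultimately show ?thesis
        using \<open>w \<noteq> v\<close> by (cases "v < w") (auto simp: join_vertex_def mult_ac)
    qed
    have "bd K (join_vertex K v c) G
        = (\<Sum>w\<in>\<Union>K - G. if insert w G \<in> K then insert_sign G w * join_vertex K v c (insert w G) else 0)"
      using True by (simp add: bd_eq_sum)
    also have "\<dots> = (\<Sum>w\<in>\<Union>K - G.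
        - (insert_sign H v * (if insert w G \<in> K then insert_sign H w * c (insert w H) else 0)))"
      using summand by (rule sum.cong[OF refl])
    also have "\<dots> = - (insert_sign H v * bd (link K v) c H)"
      unfolding bd_link[OF K G(2) True[unfolded G(1), THEN conjunct2]] G(1)
      by (simp add: sum_negf sum_distrib_left)
    also have "\<dots> = - join_vertex K v (bd (link K v) c) G"
      using True by (simp add: join_vertex_def H_def)
    finally show ?thesis
      using True by (simp add: star_proj_def)
  qed
qed

lemma split_chain_complex_star:
  assumes K: "simplicial_complex K"
  shows "split_chain_complex fscale (chains TYPE('a::field) K) (bd K) (star_proj v)"
proof (intro split_chain_complex.intro split_chain_complex_axioms.intro finite_chain_complex_chains[OF K])
  show "star_proj v (bd K x) = 0" if "star_proj v x = 0" for x :: "nat set \<Rightarrow> 'a"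
  proof (rule star_proj_bd_of_off_star)
    show "x F = 0" if "v \<in> F" for F
      using fun_cong[OF \<open>star_proj v x = 0\<close>, of F] that by (simp add: star_proj_def)
  qed
  show "star_proj v x \<in> chains TYPE('a) K p" if "x \<in> chains TYPE('a) K p" for x p
    using that by (rule star_proj_chains)
  show "star_proj v (star_proj v x) = star_proj v x" for x :: "nat set \<Rightarrow> 'a"
    by (simp add: star_proj_def fun_eq_iff)
qed (rule linear_star_proj)

lemma bd_deletion_chains:
  assumes "simplicial_complex K" "x \<in> chains TYPE('a::field) (deletion K v) p"
  shows "bd K x = bd (deletion K v) x"
  using assms by (intro bd_deletion[symmetric]) (auto simp: chains_def faces_def deletion_def)

lemma cycles_boundaries_deletion:
  assumes "simplicial_complex K"
  shows "cycles (chains TYPE('a::field) (deletion K v)) (bd K)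
      = cycles (chains TYPE('a) (deletion K v)) (bd (deletion K v))"
    and "boundaries (chains TYPE('a) (deletion K v)) (bd K)
      = boundaries (chains TYPE('a) (deletion K v)) (bd (deletion K v))"
  using bd_deletion_chains[OF assms] by (blast intro: cycles_cong boundaries_cong)+

lemma shifted_isomorphism_link:
  assumes K: "simplicial_complex K"
  shows "shifted_isomorphism fscale (chains TYPE('a::field) (link K v)) (bd (link K v))
    (\<lambda>p. {x \<in> chains TYPE('a) K p. star_proj v x = x}) (\<lambda>x. star_proj v (bd K x)) (join_vertex K v)"
proof (intro shifted_isomorphism.intro shifted_isomorphism_axioms.intro linear_join_vertex
    finite_chain_complex_chains[OF simplicial_complex_link[OF K]])
  show "join_vertex K v ` chains TYPE('a) (link K v) (p - 1) = {x \<in> chains TYPE('a) K p. star_proj v x = x}"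
    for p
    by (simp add: join_vertex_image[OF K])
  show "x = 0" if "x \<in> chains TYPE('a) (link K v) p" "join_vertex K v x = 0" for p x
    by (rule join_vertex_eq_zero[OF _ that(2)]) (use that(1) in \<open>auto simp: chains_def faces_def\<close>)
  show "star_proj v (bd K (join_vertex K v x)) = - join_vertex K v (bd (link K v) x)" for x
    by (rule star_proj_bd_join_vertex[OF K])
qed

text \<open>Relative to the star projection of v, the kernel complex D consists of the chains of the
  deletion and the image complex E is the shifted copy of the chains of the link.\<close>

theorem rhdim_eq_rhdim_deletion:
  assumes K: "simplicial_complex K"
    and link: "acyclic_complex (chains TYPE('a::field) (link K v)) (bd (link K v))"
  shows "rhdim TYPE('a) K p = rhdim TYPE('a) (deletion K v) p"
proof -
  interpret split_chain_complex fscale "chains TYPE('a) K" "bd K" "star_proj v"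
    by (rule split_chain_complex_star[OF K])
  interpret L: shifted_isomorphism fscale "chains TYPE('a) (link K v)" "bd (link K v)" E
      "\<lambda>x. star_proj v (bd K x)" "join_vertex K v"
    using shifted_isomorphism_link[OF K] by (simp add: E_def[abs_def])
  have "D = chains TYPE('a) (deletion K v)"
    by (simp add: fun_eq_iff D_def chains_deletion)
  then have "rhdim TYPE('a) (deletion K v) p = VS.homology_dim D (bd K) p"
    by (simp add: rhdim_eq_homology_dim VS.homology_dim_def cycles_boundaries_deletion[OF K])
  also have "\<dots> = rhdim TYPE('a) K p"
    using homology_dim_eq_kernel[OF L.acyclic_shifted[OF link]] by (simp add: rhdim_eq_homology_dim)
  finally show ?thesis ..
qed

theorem rhdim_eq_rhdim_link:
  assumes K: "simplicial_complex K"
    and deletion: "acyclic_complex (chains TYPE('a::field) (deletion K v)) (bd (deletion K v))"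
  shows "rhdim TYPE('a) K p = rhdim TYPE('a) (link K v) (p - 1)"
proof -
  interpret split_chain_complex fscale "chains TYPE('a) K" "bd K" "star_proj v"
    by (rule split_chain_complex_star[OF K])
  interpret L: shifted_isomorphism fscale "chains TYPE('a) (link K v)" "bd (link K v)" E
      "\<lambda>x. star_proj v (bd K x)" "join_vertex K v"
    using shifted_isomorphism_link[OF K] by (simp add: E_def[abs_def])
  have "D = chains TYPE('a) (deletion K v)"
    by (simp add: fun_eq_iff D_def chains_deletion)
  then have "acyclic_complex D (bd K)"
    using deletion by (simp add: acyclic_complex_def cycles_boundaries_deletion[OF K])
  then show ?thesis
    using homology_dim_eq_image L.homology_dim_shifted by (simp add: rhdim_eq_homology_dim)
qed

section \<open>The complexes Omega\<close>

definition avoid_complex :: "nat set \<Rightarrow> nat set set \<Rightarrow> nat set set" where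
  "avoid_complex V Ws = {F. F \<subseteq> V \<and> (\<exists>W\<in>Ws. F \<inter> W = {})}"

lemma simplicial_complex_avoid_complex:
  assumes "finite V"
  shows "simplicial_complex (avoid_complex V Ws)"
proof -
  have "avoid_complex V Ws \<subseteq> Pow V"
    by (auto simp: avoid_complex_def)
  then have "finite (avoid_complex V Ws)"
    using assms finite_subset by blast
  moreover have "G \<in> avoid_complex V Ws" if "F \<in> avoid_complex V Ws" "G \<subseteq> F" for F G
    using that by (auto simp: avoid_complex_def)
  ultimately show ?thesis
    by (simp add: simplicial_complex_def)
qed

lemma deletion_avoid_complex:
  "deletion (avoid_complex V (f ` I)) v = avoid_complex (V - {v}) ((\<lambda>i. f i - {v}) ` I)"
  by (auto simp: deletion_def avoid_complex_def)

lemma link_avoid_complex: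
  "v \<in> V \<Longrightarrow> link (avoid_complex V (f ` I)) v = avoid_complex (V - {v}) (f ` {i \<in> I. v \<notin> f i})"
  by (auto simp: link_def avoid_complex_def)

lemma acyclic_avoid_complex_apex:
  assumes "finite V" "x \<in> V" "\<And>i. i \<in> I \<Longrightarrow> x \<notin> f i"
  shows "acyclic_complex (chains TYPE('a::field) (avoid_complex V (f ` I))) (bd (avoid_complex V (f ` I)))"
  by (rule acyclic_cone[OF simplicial_complex_avoid_complex[OF assms(1)]])
    (use assms(2,3) in \<open>auto simp: avoid_complex_def\<close>)

lemma acyclic_avoid_complex_empty_member:
  assumes "finite V" "x \<in> V" "i \<in> I" "f i = {}"
  shows "acyclic_complex (chains TYPE('a::field) (avoid_complex V (f ` I))) (bd (avoid_complex V (f ` I)))"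
  by (rule acyclic_cone[OF simplicial_complex_avoid_complex[OF assms(1)]])
    (use assms(2-4) in \<open>auto simp: avoid_complex_def\<close>)

definition window :: "nat \<Rightarrow> nat \<Rightarrow> nat set" where
  "window t i = {i..<i + t}"

definition Omega_at :: "nat \<Rightarrow> nat \<Rightarrow> nat \<Rightarrow> nat set set" where
  "Omega_at a n t = avoid_complex {a + 1..a + n} (window t ` {a + 1..a + n - t + 1})"

lemma Omega_eq_Omega_at:
  assumes "1 \<le> t"
  shows "Omega n t = Omega_at 0 n t"
proof -
  have "{i..i + t - 1} = window t i" for i
    using assms by (auto simp: window_def)
  then show ?thesis
    unfolding Omega_def Omega_at_def avoid_complex_def by auto
qed

lemma Omega_at_self: "Omega_at a t t = {{}}"
proof -
  have "window t (a + 1) = {a + 1..a + t}"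
    by (auto simp: window_def)
  then have "Omega_at a t t = avoid_complex {a + 1..a + t} {{a + 1..a + t}}"
    by (simp add: Omega_at_def)
  then show ?thesis
    by (auto simp: avoid_complex_def)
qed

text \<open>Deleting the vertex a+2+j does not change the homology: its link is a cone with apex a+1,
  since the only window containing a+1 also contains a+2+j.\<close>

lemma rhdim_strip_step:
  assumes t: "t + 1 \<le> n" and j: "Suc j \<le> t - 1"
  shows "rhdim TYPE('a::field) (avoid_complex ({a+1..a+n} - {a+2..a+1+j})
      ((\<lambda>i. window t i - {a+2..a+1+j}) ` {a+1..a+n-t+1})) p
    = rhdim TYPE('a) (avoid_complex ({a+1..a+n} - {a+2..a+1+Suc j})
      ((\<lambda>i. window t i - {a+2..a+1+Suc j}) ` {a+1..a+n-t+1})) p"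
proof -
  let ?V = "{a+1..a+n}" and ?I = "{a+1..a+n-t+1}" and ?S = "{a+2..a+1+j}"
  define v where "v = a + 2 + j"
  define K where "K = avoid_complex (?V - ?S) ((\<lambda>i. window t i - ?S) ` ?I)"
  have v: "v \<in> ?V - ?S"
    using t j by (auto simp: v_def)
  have "acyclic_complex (chains TYPE('a) (link K v)) (bd (link K v))"
    unfolding K_def link_avoid_complex[OF v]
  proof (rule acyclic_avoid_complex_apex[where x = "a + 1"])
    show "a + 1 \<in> ?V - ?S - {v}"
      using t by (auto simp: v_def)
    fix i assume i: "i \<in> {i \<in> ?I. v \<notin> window t i - ?S}"
    show "a + 1 \<notin> window t i - ?S"
    proof
      assume "a + 1 \<in> window t i - ?S"
      then have "i \<le> a + 1"
        by (simp add: window_def)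
      then have "i = a + 1"
        using i by simp
      moreover have "v \<in> window t (a + 1) - ?S"
        using j by (simp add: window_def v_def)
      ultimately show False
        using i by simp
    qed
  qed simp
  moreover have "simplicial_complex K"
    unfolding K_def by (rule simplicial_complex_avoid_complex) simp
  ultimately have "rhdim TYPE('a) K p = rhdim TYPE('a) (deletion K v) p"
    by (intro rhdim_eq_rhdim_deletion)
  moreover have "X - {a+2..a+1+Suc j} = X - ?S - {v}" for X
    by (auto simp: v_def)
  ultimately show ?thesis
    unfolding K_def deletion_avoid_complex by simp
qed

lemma rhdim_Omega_at_strip:
  assumes t: "t + 1 \<le> n" and j: "j \<le> t - 1"
  shows "rhdim TYPE('a::field) (Omega_at a n t) p =
    rhdim TYPE('a) (avoid_complex ({a+1..a+n} - {a+2..a+1+j})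
      ((\<lambda>i. window t i - {a+2..a+1+j}) ` {a+1..a+n-t+1})) p"
  using j
proof (induction j)
  case 0
  then show ?case
    by (simp add: Omega_at_def)
next
  case (Suc j)
  then show ?case
    using rhdim_strip_step[OF t Suc.prems] by simp
qed

text \<open>After the stripping, a+1 lies in no window but the first, which has become {a+1, a+t+1};
  its deletion is therefore a full simplex, so only the link of a+1 contributes.\<close>

lemma rhdim_Omega_at_link:
  assumes t: "1 \<le> t" "t + 1 \<le> n"
  shows "rhdim TYPE('a::field) (Omega_at a n t) p = rhdim TYPE('a)
    (avoid_complex {a+t+1..a+n} ((\<lambda>i. window t i - {a+2..a+t}) ` {a+2..a+n-t+1})) (p - 1)"
proof -
  let ?V = "{a+1..a+n}" and ?I = "{a+1..a+n-t+1}" and ?S = "{a+2..a+t}"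
  define X where "X = avoid_complex (?V - ?S) ((\<lambda>i. window t i - ?S) ` ?I)"
  have X: "simplicial_complex X"
    unfolding X_def by (rule simplicial_complex_avoid_complex) simp
  have "rhdim TYPE('a) (Omega_at a n t) p = rhdim TYPE('a) X p"
    using rhdim_Omega_at_strip[OF t(2), of "t - 1" a p] t by (simp add: X_def)
  also have "\<dots> = rhdim TYPE('a) (link X (a + 1)) (p - 1)"
  proof (rule rhdim_eq_rhdim_link[OF X])
    show "acyclic_complex (chains TYPE('a) (deletion X (a + 1))) (bd (deletion X (a + 1)))"
      unfolding X_def deletion_avoid_complex
      by (rule acyclic_avoid_complex_empty_member[where x = "a + t + 1" and i = "a + 1"])
        (use t in \<open>auto simp: window_def\<close>)
  qed
  also have "link X (a + 1)
      = avoid_complex {a+t+1..a+n} ((\<lambda>i. window t i - ?S) ` {a+2..a+n-t+1})"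
  proof -
    have "a + 1 \<in> ?V - ?S"
      using t by simp
    moreover have "?V - ?S - {a + 1} = {a+t+1..a+n}"
      using t by auto
    moreover have "{i \<in> ?I. a + 1 \<notin> window t i - ?S} = {a+2..a+n-t+1}"
      using t by (auto simp: window_def)
    ultimately show ?thesis
      unfolding X_def by (simp add: link_avoid_complex)
  qed
  finally show ?thesis .
qed

lemma rhdim_Omega_at_base:
  assumes "1 \<le> t"
  shows "rhdim TYPE('a::field) (Omega_at a (t + 1) t) p = rhdim TYPE('a) {{}} (p - 1)"
proof -
  have "window t (a + 2) - {a+2..a+t} = {a+t+1}"
    using assms by (auto simp: window_def)
  then have "avoid_complex {a+t+1..a+(t+1)} ((\<lambda>i. window t i - {a+2..a+t}) ` {a+2..a+(t+1)-t+1})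
      = avoid_complex {a+t+1} {{a+t+1}}"
    by simp
  also have "\<dots> = {{}}"
    by (auto simp: avoid_complex_def)
  finally show ?thesis
    using rhdim_Omega_at_link[OF assms, of "t + 1" a p] by simp
qed

text \<open>In the link of a+1 the window of a+2 has shrunk to {a+t+1}, so deleting a+t+1 again leaves
  a full simplex; the windows avoiding a+t+1 are exactly those of the translate of Omega on the
  remaining vertices.\<close>

lemma rhdim_Omega_at_step:
  assumes t: "1 \<le> t" "t + 2 \<le> n"
  shows "rhdim TYPE('a::field) (Omega_at a n t) p
    = rhdim TYPE('a) (Omega_at (a + t + 1) (n - (t + 1)) t) (p - 2)"
proof -
  let ?S = "{a+2..a+t}" and ?I = "{a+2..a+n-t+1}" and ?v = "a + t + 1"
  define L where "L = avoid_complex {a+t+1..a+n} ((\<lambda>i. window t i - ?S) ` ?I)"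
  have L: "simplicial_complex L"
    unfolding L_def by (rule simplicial_complex_avoid_complex) simp
  have "t + 1 \<le> n"
    using t by simp
  then have "rhdim TYPE('a) (Omega_at a n t) p = rhdim TYPE('a) L (p - 1)"
    unfolding L_def by (rule rhdim_Omega_at_link[OF t(1)])
  also have "\<dots> = rhdim TYPE('a) (link L ?v) (p - 1 - 1)"
  proof (rule rhdim_eq_rhdim_link[OF L])
    show "acyclic_complex (chains TYPE('a) (deletion L ?v)) (bd (deletion L ?v))"
      unfolding L_def deletion_avoid_complex
      by (rule acyclic_avoid_complex_empty_member[where x = "a + t + 2" and i = "a + 2"])
        (use t in \<open>auto simp: window_def\<close>)
  qed
  also have "link L ?v = Omega_at (a + t + 1) (n - (t + 1)) t"
  proof -
    have "{a+t+1..a+n} - {?v} = {a+t+2..a+n}"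
      by auto
    moreover have "{i \<in> ?I. ?v \<notin> window t i - ?S} = {a+t+2..a+n-t+1}"
      using t by (auto simp: window_def)
    moreover have "(\<lambda>i. window t i - ?S) ` {a+t+2..a+n-t+1} = window t ` {a+t+2..a+n-t+1}"
      by (rule image_cong) (auto simp: window_def)
    moreover have "a + t + 1 + (n - (t + 1)) = a + n"
      using t by simp
    ultimately show ?thesis
      unfolding L_def Omega_at_def using t by (simp add: link_avoid_complex)
  qed
  finally show ?thesis
    by (simp add: algebra_simps)
qed

lemma Omega_at_short:
  assumes "n < t" "t \<le> a + n"
  shows "Omega_at a n t = {}"
proof -
  have "{a + 1..a + n - t + 1} = {}"
    using assms by auto
  then show ?thesis
    by (simp add: Omega_at_def avoid_complex_def)
qed

definition rhdim_formula :: "'k::field itself \<Rightarrow> nat \<Rightarrow> nat \<Rightarrow> int \<Rightarrow> nat" where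
  "rhdim_formula T n t p =
    (if n mod (t + 1) = 0 then rhdim T {{}} (p + 1 - 2 * (int n div (int t + 1)))
     else if n mod (t + 1) = t then rhdim T {{}} (p + 2 - 2 * ((int n + 1) div (int t + 1)))
     else 0)"

lemma rhdim_formula_shift:
  assumes "t + 1 \<le> n"
  shows "rhdim_formula T n t p = rhdim_formula T (n - (t + 1)) t (p - 2)"
proof -
  have "n mod (t + 1) = (n - (t + 1)) mod (t + 1)"
    using assms by (simp add: le_mod_geq)
  moreover have "int n div (int t + 1) = int (n - (t + 1)) div (int t + 1) + 1"
  proof -
    have "int n = int (n - (t + 1)) + (int t + 1)"
      using assms by simp
    then show ?thesis
      by (metis div_add_self2 of_nat_Suc of_nat_neq_0 Suc_eq_plus1_left add.commute)
  qed
  moreover have "(int n + 1) div (int t + 1) = (int (n - (t + 1)) + 1) div (int t + 1) + 1"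
  proof -
    have "int n + 1 = (int (n - (t + 1)) + 1) + (int t + 1)"
      using assms by simp
    then show ?thesis
      by (metis div_add_self2 of_nat_Suc of_nat_neq_0 Suc_eq_plus1_left add.commute)
  qed
  ultimately show ?thesis
    unfolding rhdim_formula_def by (simp add: algebra_simps)
qed

lemma rhdim_Omega_at:
  assumes t: "1 \<le> t" and "t \<le> n"
  shows "rhdim TYPE('a::field) (Omega_at a n t) p = rhdim_formula TYPE('a) n t p"
  using assms(2)
proof (induction n arbitrary: a p rule: less_induct)
  case (less n)
  consider "n = t" | "n = t + 1" | "t + 2 \<le> n" "n < 2 * t + 1" | "2 * t + 1 \<le> n"
    using less.prems by linarith
  then show ?case
  proof cases
    case 1
    then show ?thesis
      using t by (simp add: rhdim_formula_def Omega_at_self)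
  next
    case 2
    have "(int t + 1) div (int t + 1) = 1"
      using t by simp
    then show ?thesis
      using 2 rhdim_Omega_at_base[OF t, of a p] by (simp add: rhdim_formula_def algebra_simps)
  next
    case 3
    then have "n mod (t + 1) = n - (t + 1)"
      by (simp add: le_mod_geq)
    moreover have "n - (t + 1) \<noteq> 0" "n - (t + 1) \<noteq> t"
      using 3 by linarith+
    ultimately have "rhdim_formula TYPE('a) n t p = 0"
      by (simp add: rhdim_formula_def)
    moreover have "Omega_at (a + t + 1) (n - (t + 1)) t = {}"
      using 3 by (intro Omega_at_short) auto
    ultimately show ?thesis
      using rhdim_Omega_at_step[OF t 3(1), of a p] by (simp add: rhdim_empty_complex)
  next
    case 4
    then have "rhdim TYPE('a) (Omega_at a n t) p = rhdim TYPE('a) (Omega_at (a + t + 1) (n - (t + 1)) t) (p - 2)"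
      using t by (intro rhdim_Omega_at_step) auto
    also have "\<dots> = rhdim_formula TYPE('a) (n - (t + 1)) t (p - 2)"
      using 4 t by (intro less.IH) auto
    also have "\<dots> = rhdim_formula TYPE('a) n t p"
      using 4 by (intro rhdim_formula_shift[symmetric]) auto
    finally show ?thesis .
  qed
qed

theorem mainTheorem2:
  fixes n t :: nat and p :: int
  assumes "1 \<le> t" and "t \<le> n"
  shows "rhdim TYPE('k::field) (Omega n t) p =
    (if n mod (t + 1) = 0 then rhdim TYPE('k) {{}} (p + 1 - 2 * (int n div (int t + 1)))
     else if n mod (t + 1) = t then rhdim TYPE('k) {{}} (p + 2 - 2 * ((int n + 1) div (int t + 1)))
     else 0)"
  using rhdim_Omega_at[OF assms, of 0 p] Omega_eq_Omega_at[OF assms(1), of n]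
  by (simp add: rhdim_formula_def)

end
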